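(* For every $p\in\mathbb R^m$, $$H^+(p):=\min_{Q}\max_{w\in\Delta_K}\sum_{i=1}^m\sum_{a}w(a)D(Q_a\|\nu^i_a)p_i\;=\;H^-(p):=\max_{w\in\Delta_K}\min_{Q}\sum_{i=1}^m\sum_{a}w(a)D(Q_a\|\nu^i_a)p_i,$$ ($Q$ ranging over $(\Delta_{\mathcal X})^K$), and this common value $H(p)$ equals $$H(p)=\begin{cases}\max_{a\in[K]}-\big(\sum_i p_i\big)\log\Big(\sum_{x\in\mathcal X}\prod_{i=1}^m\nu^i_a(x)^{p_i/\sum_k p_k}\Big),&\text{if }\sum_ip_i>0,\\[2pt] \max_{a\in[K]}\min_{x\in\mathcal X}-\sum_ip_i\log\nu^i_a(x),&\text{if }\sum_ip_i\le0.\end{cases}$$ Moreover $H$ is Lipschitz continuous on $\mathbb R^m$ with Lipschitz constant $\sqrt m\log(1/\epsilon)$, and $H$ is non-decreasing in each coordinate $p_i$.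
   Context: $\mathcal X$ is a finite set, $\Delta_{\mathcal X}$ the probability distributions on $\mathcal X$, $\Delta_K$ the simplex on $[K]$, $D$ the KL divergence. Fix $m\ge2$ bandits $\nu^1,\dots,\nu^m$, $\nu^i=(\nu^i_a)_{a\in[K]}$, with $\nu^i_a\in\Delta_{\mathcal X}$ and $\nu^i_a(x)\ge\epsilon$ for all $i,a,x$, for some $\epsilon\in(0,1)$. *)

theory Defs
  imports "HOL-Analysis.Analysis"
begin

definition prob_simplex :: "('b::finite \<Rightarrow> real) set" where
  "prob_simplex = {q. (\<forall>x. 0 \<le> q x) \<and> sum q UNIV = 1}"

definition KL :: "('x::finite \<Rightarrow> real) \<Rightarrow> ('x \<Rightarrow> real) \<Rightarrow> real" where
  "KL Q P = (\<Sum>x\<in>UNIV. if Q x = 0 then 0 else Q x * ln (Q x / P x))"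

definition objective ::
  "('m::finite \<Rightarrow> 'a::finite \<Rightarrow> 'x::finite \<Rightarrow> real) \<Rightarrow> real^'m \<Rightarrow> ('a \<Rightarrow> 'x \<Rightarrow> real) \<Rightarrow> ('a \<Rightarrow> real) \<Rightarrow> real" where
  "objective nu p Q w = (\<Sum>i\<in>UNIV. \<Sum>a\<in>UNIV. w a * KL (Q a) (nu i a) * p $ i)"

definition Hplus ::
  "('m::finite \<Rightarrow> 'a::finite \<Rightarrow> 'x::finite \<Rightarrow> real) \<Rightarrow> real^'m \<Rightarrow> real" where
  "Hplus nu p = (INF Q\<in>{Q. \<forall>a. Q a \<in> prob_simplex}. SUP w\<in>prob_simplex. objective nu p Q w)"

definition Hminus ::
  "('m::finite \<Rightarrow> 'a::finite \<Rightarrow> 'x::finite \<Rightarrow> real) \<Rightarrow> real^'m \<Rightarrow> real" where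
  "Hminus nu p = (SUP w\<in>prob_simplex. INF Q\<in>{Q. \<forall>a. Q a \<in> prob_simplex}. objective nu p Q w)"

end

theory Submission
  imports Defs
begin

text \<open>
  The objective is linear in w and separable in Q, so for either order of the min and the max
  the inner optimisation can be done arm by arm, and both values equal the maximum over the arms a
  of V_a(p) = min_q \<Sum>_i p_i KL(q || \<nu>^i_a).
  With s = \<Sum>_i p_i, the weighted divergence is s times the negative entropy of q plus the
  q-average of the log-loss -\<Sum>_i p_i ln \<nu>^i_a(x).
  For s > 0 it equals s KL(q || r) - s ln Z, where r = g / Z normalises the geometric mixture
  g(x) = \<Prod>_i \<nu>^i_a(x) powr (p_i / s); this gives the first formula.
  For s \<le> 0 the entropy term is nonnegative and vanishes at point masses, so the minimum is the
  least log-loss. Since every KL(q || \<nu>^i_a) lies in [0, ln (1/\<epsilon>)], each V_a is monotone in p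
  and ln (1/\<epsilon>)-Lipschitz for the l1 norm, hence sqrt m ln (1/\<epsilon>)-Lipschitz for the Euclidean one.
\<close>

section \<open>Averages over the probability simplex\<close>

lemma prob_simplex_nonneg: "q \<in> prob_simplex \<Longrightarrow> 0 \<le> q x"
  unfolding prob_simplex_def by simp

lemma prob_simplex_sum: "q \<in> prob_simplex \<Longrightarrow> sum q UNIV = 1"
  unfolding prob_simplex_def by simp

lemma prob_simplex_le_one:
  assumes "q \<in> prob_simplex" shows "q x \<le> 1"
proof -
  have "q x \<le> sum q UNIV"
    using assms by (intro member_le_sum) (auto intro: prob_simplex_nonneg)
  with assms show ?thesis by (simp add: prob_simplex_sum)
qed

lemma prob_simplex_point_mass: "(\<lambda>b. if b = a then 1 else 0) \<in> prob_simplex"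
  unfolding prob_simplex_def by simp

lemma sum_point_mass_mult:
  fixes F :: "'b::finite \<Rightarrow> 'c::semiring_1"
  shows "(\<Sum>b\<in>UNIV. (if b = a then 1 else 0) * F b) = F a"
proof -
  have "(\<Sum>b\<in>UNIV. (if b = a then 1 else 0) * F b) = (\<Sum>b\<in>UNIV. if b = a then F b else 0)"
    by (intro sum.cong) auto
  then show ?thesis by simp
qed

lemma prob_simplex_sum_mult_const: "w \<in> prob_simplex \<Longrightarrow> (\<Sum>a\<in>UNIV. w a * c) = c"
  by (simp add: prob_simplex_sum flip: sum_distrib_right)

lemma prob_simplex_sum_mult_mono:
  "w \<in> prob_simplex \<Longrightarrow> (\<And>a. F a \<le> G a) \<Longrightarrow> (\<Sum>a\<in>UNIV. w a * F a) \<le> (\<Sum>a\<in>UNIV. w a * G a)"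
  by (intro sum_mono mult_left_mono) (auto intro: prob_simplex_nonneg)

lemma Max_range_attained:
  fixes F :: "'a::finite \<Rightarrow> 'b::linorder"
  obtains a where "Max (range F) = F a"
proof -
  have "Max (range F) \<in> range F" by (rule Max_in) auto
  then show ?thesis using that by blast
qed

lemma Max_range_le_Max_range_plus:
  fixes g h :: "'a::finite \<Rightarrow> real"
  assumes "\<And>a. g a \<le> h a + d" shows "Max (range g) \<le> Max (range h) + d"
proof -
  obtain a where "Max (range g) = g a" by (rule Max_range_attained)
  moreover have "h a \<le> Max (range h)" by (rule Max_ge) auto
  ultimately show ?thesis using assms[of a] by linarith
qed

lemma Max_range_mono:
  fixes g h :: "'a::finite \<Rightarrow> real"
  assumes "\<And>a. g a \<le> h a" shows "Max (range g) \<le> Max (range h)"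
  using Max_range_le_Max_range_plus[of g h 0] assms by simp

lemma abs_Max_range_diff_le:
  fixes g h :: "'a::finite \<Rightarrow> real"
  assumes "\<And>a. \<bar>g a - h a\<bar> \<le> d" shows "\<bar>Max (range g) - Max (range h)\<bar> \<le> d"
proof -
  have bounds: "g a \<le> h a + d" "h a \<le> g a + d" for a
    using assms[of a] by (auto simp: abs_le_iff)
  have "Max (range g) \<le> Max (range h) + d"
    using bounds(1) by (rule Max_range_le_Max_range_plus)
  moreover have "Max (range h) \<le> Max (range g) + d"
    using bounds(2) by (rule Max_range_le_Max_range_plus)
  ultimately show ?thesis by linarith
qed

lemma prob_simplex_sum_mult_le_Max:
  fixes F :: "'a::finite \<Rightarrow> real"
  assumes "w \<in> prob_simplex" shows "(\<Sum>a\<in>UNIV. w a * F a) \<le> Max (range F)"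
proof -
  have "(\<Sum>a\<in>UNIV. w a * F a) \<le> (\<Sum>a\<in>UNIV. w a * Max (range F))"
    using assms by (intro prob_simplex_sum_mult_mono) auto
  with assms show ?thesis by (simp add: prob_simplex_sum_mult_const)
qed

lemma prob_simplex_sum_mult_Max_attained:
  fixes F :: "'a::finite \<Rightarrow> real"
  shows "\<exists>w\<in>prob_simplex. (\<Sum>a\<in>UNIV. w a * F a) = Max (range F)"
proof -
  obtain a where "Max (range F) = F a" by (rule Max_range_attained)
  then show ?thesis
    by (intro bexI[of _ "\<lambda>b. if b = a then 1 else 0"])
      (simp_all add: prob_simplex_point_mass sum_point_mass_mult)
qed

lemma SUP_prob_simplex_sum_mult:
  fixes F :: "'a::finite \<Rightarrow> real"
  shows "(SUP w\<in>prob_simplex. \<Sum>a\<in>UNIV. w a * F a) = Max (range F)"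
proof (rule cSup_eq_maximum)
  obtain w where "w \<in> prob_simplex" "(\<Sum>a\<in>UNIV. w a * F a) = Max (range F)"
    using prob_simplex_sum_mult_Max_attained by blast
  then show "Max (range F) \<in> (\<lambda>w. \<Sum>a\<in>UNIV. w a * F a) ` prob_simplex"
    by (intro rev_image_eqI[of w]) simp_all
qed (clarsimp simp: prob_simplex_sum_mult_le_Max)

section \<open>Entropy and Kullback-Leibler divergence\<close>

definition neg_entropy :: "('x::finite \<Rightarrow> real) \<Rightarrow> real" where
  "neg_entropy q = (\<Sum>x\<in>UNIV. if q x = 0 then 0 else q x * ln (q x))"

lemma neg_entropy_nonpos:
  assumes "q \<in> prob_simplex" shows "neg_entropy q \<le> 0"
  unfolding neg_entropy_def
proof (rule sum_nonpos)
  fix x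
  have "0 \<le> q x" "q x \<le> 1"
    using assms by (auto intro: prob_simplex_nonneg prob_simplex_le_one)
  then show "(if q x = 0 then 0 else q x * ln (q x)) \<le> 0"
    by (auto intro: mult_nonneg_nonpos)
qed

lemma neg_entropy_point_mass: "neg_entropy (\<lambda>b. if b = x then 1 else 0) = 0"
  unfolding neg_entropy_def by (intro sum.neutral) auto

lemma KL_eq_neg_entropy_minus_cross_entropy:
  assumes "\<And>x. 0 < P x" and "q \<in> prob_simplex"
  shows "KL q P = neg_entropy q - (\<Sum>x\<in>UNIV. q x * ln (P x))"
proof -
  have "KL q P = (\<Sum>x\<in>UNIV. (if q x = 0 then 0 else q x * ln (q x)) - q x * ln (P x))"
    unfolding KL_def
  proof (rule sum.cong)
    fix x
    have "0 \<le> q x" "0 < P x" using assms by (auto intro: prob_simplex_nonneg)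
    then show "(if q x = 0 then 0 else q x * ln (q x / P x))
             = (if q x = 0 then 0 else q x * ln (q x)) - q x * ln (P x)"
      by (auto simp: ln_div right_diff_distrib)
  qed simp
  then show ?thesis unfolding neg_entropy_def by (simp add: sum_subtractf)
qed

lemma KL_nonneg:
  assumes q: "q \<in> prob_simplex" and r: "r \<in> prob_simplex" and r_pos: "\<And>x. 0 < r x"
  shows "0 \<le> KL q r"
proof -
  have "(\<Sum>x\<in>UNIV. q x - r x) \<le> KL q r"
    unfolding KL_def
  proof (rule sum_mono)
    fix x
    show "q x - r x \<le> (if q x = 0 then 0 else q x * ln (q x / r x))"
    proof (cases "q x = 0")
      case False
      then have qx: "0 < q x" using prob_simplex_nonneg[OF q] by (simp add: less_le)
      have "q x - r x = q x * (1 - r x / q x)" using qx by (simp add: field_simps)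
      also have "\<dots> \<le> q x * - ln (r x / q x)"
        using qx r_pos[of x] ln_le_minus_one[of "r x / q x"] by (intro mult_left_mono) auto
      also have "\<dots> = q x * ln (q x / r x)" using qx r_pos[of x] by (simp add: ln_div)
      finally show ?thesis using False by simp
    qed (simp add: less_imp_le r_pos)
  qed
  also have "(\<Sum>x\<in>UNIV. q x - r x) = 0"
    using q r by (simp add: sum_subtractf prob_simplex_sum)
  finally show ?thesis .
qed

lemma KL_self: "(\<And>x. 0 < r x) \<Longrightarrow> KL r r = 0"
  unfolding KL_def by (intro sum.neutral) (simp add: less_imp_neq[symmetric])

lemma KL_le_ln_inverse:
  assumes q: "q \<in> prob_simplex" and P_ge: "\<And>x. eps \<le> P x" and eps: "0 < eps"
  shows "KL q P \<le> ln (1 / eps)"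
proof -
  have P_pos: "0 < P x" for x using P_ge[of x] eps by linarith
  have "ln eps = (\<Sum>x\<in>UNIV. q x * ln eps)"
    using q by (simp add: prob_simplex_sum_mult_const)
  also have "\<dots> \<le> (\<Sum>x\<in>UNIV. q x * ln (P x))"
    using q P_ge eps by (intro prob_simplex_sum_mult_mono ln_mono)
  finally show ?thesis
    using KL_eq_neg_entropy_minus_cross_entropy[OF P_pos q] neg_entropy_nonpos[OF q] eps
    by (simp add: ln_div)
qed

section \<open>Minimising a weighted sum of divergences\<close>

definition weighted_KL :: "('m::finite \<Rightarrow> 'x::finite \<Rightarrow> real) \<Rightarrow> ('m \<Rightarrow> real) \<Rightarrow> ('x \<Rightarrow> real) \<Rightarrow> real"
  where "weighted_KL P c q = (\<Sum>i\<in>UNIV. c i * KL q (P i))"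

definition log_loss :: "('m::finite \<Rightarrow> 'x \<Rightarrow> real) \<Rightarrow> ('m \<Rightarrow> real) \<Rightarrow> 'x \<Rightarrow> real"
  where "log_loss P c x = - (\<Sum>i\<in>UNIV. c i * ln (P i x))"

definition min_weighted_KL :: "('m::finite \<Rightarrow> 'x::finite \<Rightarrow> real) \<Rightarrow> ('m \<Rightarrow> real) \<Rightarrow> real"
  where "min_weighted_KL P c =
    (if sum c UNIV > 0
     then - sum c UNIV * ln (\<Sum>x\<in>UNIV. \<Prod>i\<in>UNIV. P i x powr (c i / sum c UNIV))
     else Min (range (log_loss P c)))"

lemma weighted_KL_eq_neg_entropy_plus_log_loss:
  assumes "\<And>i x. 0 < P i x" and "q \<in> prob_simplex"
  shows "weighted_KL P c q = sum c UNIV * neg_entropy q + (\<Sum>x\<in>UNIV. q x * log_loss P c x)"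
proof -
  have "weighted_KL P c q = (\<Sum>i\<in>UNIV. c i * (neg_entropy q - (\<Sum>x\<in>UNIV. q x * ln (P i x))))"
    unfolding weighted_KL_def
    by (simp add: KL_eq_neg_entropy_minus_cross_entropy[OF assms(1) assms(2)])
  also have "\<dots> = sum c UNIV * neg_entropy q - (\<Sum>x\<in>UNIV. \<Sum>i\<in>UNIV. q x * (c i * ln (P i x)))"
    by (subst sum.swap)
      (simp add: right_diff_distrib sum_subtractf sum_distrib_left sum_distrib_right mult_ac)
  finally show ?thesis
    by (simp add: log_loss_def sum_distrib_left sum_negf)
qed

lemma weighted_KL_geometric_mixture_decomposition:
  assumes P_pos: "\<And>i x. 0 < P i x" and s_pos: "0 < sum c UNIV"
  shows "\<exists>r\<in>prob_simplex. (\<forall>x. 0 < r x) \<and>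
           (\<forall>q\<in>prob_simplex. weighted_KL P c q = sum c UNIV * KL q r + min_weighted_KL P c)"
proof -
  define s where "s = sum c UNIV"
  define g where "g x = (\<Prod>i\<in>UNIV. P i x powr (c i / s))" for x
  define Z where "Z = (\<Sum>x\<in>UNIV. g x)"
  define r where "r x = g x / Z" for x
  have P_nz: "P i x \<noteq> 0" for i x using P_pos[of i x] by simp
  have g_pos: "0 < g x" for x
    unfolding g_def by (intro prod_pos) (simp add: P_nz)
  have ln_g: "ln (g x) = - log_loss P c x / s" for x
    unfolding g_def log_loss_def using P_pos
    by (simp add: ln_prod ln_powr sum_divide_distrib P_nz)
  have Z_pos: "0 < Z" unfolding Z_def using g_pos by (intro sum_pos) auto
  have r_pos: "0 < r x" for x unfolding r_def using g_pos Z_pos by simp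
  have ln_r: "ln (r x) = - log_loss P c x / s - ln Z" for x
    unfolding r_def using g_pos[of x] Z_pos by (simp add: ln_div ln_g)
  have r_simplex: "r \<in> prob_simplex"
    unfolding prob_simplex_def r_def using g_pos Z_pos
    by (auto simp: less_imp_le Z_def[symmetric] simp flip: sum_divide_distrib)
  have min_eq: "min_weighted_KL P c = - s * ln Z"
    unfolding min_weighted_KL_def Z_def g_def s_def using s_pos by simp
  have "weighted_KL P c q = s * KL q r + min_weighted_KL P c" if q: "q \<in> prob_simplex" for q
  proof -
    have "KL q r = neg_entropy q - (\<Sum>x\<in>UNIV. q x * (- log_loss P c x / s - ln Z))"
      by (simp add: KL_eq_neg_entropy_minus_cross_entropy[OF r_pos q] ln_r)
    also have "(\<Sum>x\<in>UNIV. q x * (- log_loss P c x / s - ln Z))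
             = - (\<Sum>x\<in>UNIV. q x * log_loss P c x) / s - ln Z"
      using q by (simp add: right_diff_distrib sum_subtractf sum_divide_distrib sum_negf
          prob_simplex_sum_mult_const)
    finally have "s * KL q r = s * neg_entropy q + (\<Sum>x\<in>UNIV. q x * log_loss P c x) + s * ln Z"
      using s_pos by (simp add: s_def field_simps)
    then show ?thesis
      using weighted_KL_eq_neg_entropy_plus_log_loss[of P q c, OF P_pos q, folded s_def] min_eq by simp
  qed
  with r_simplex r_pos show ?thesis by (auto simp: s_def)
qed

lemma min_weighted_KL_is_min:
  assumes P_pos: "\<And>i x. 0 < P i x"
  shows "(\<exists>q\<in>prob_simplex. weighted_KL P c q = min_weighted_KL P c) \<and>
         (\<forall>q\<in>prob_simplex. min_weighted_KL P c \<le> weighted_KL P c q)"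
proof (cases "0 < sum c UNIV")
  case True
  then obtain r where r: "r \<in> prob_simplex" "\<And>x. 0 < r x"
    and decomp: "\<And>q. q \<in> prob_simplex \<Longrightarrow> weighted_KL P c q = sum c UNIV * KL q r + min_weighted_KL P c"
    using weighted_KL_geometric_mixture_decomposition[of P, OF P_pos] by blast
  show ?thesis
    using decomp r KL_self[of r] KL_nonneg[OF _ r] True by auto
next
  case False
  obtain x0 where x0: "Min (range (log_loss P c)) = log_loss P c x0"
  proof -
    have "Min (range (log_loss P c)) \<in> range (log_loss P c)" by (rule Min_in) auto
    then show ?thesis using that by blast
  qed
  define d where "d = (\<lambda>x. if x = x0 then 1 else 0 :: real)"
  have d: "d \<in> prob_simplex" unfolding d_def by (rule prob_simplex_point_mass)
  have min_eq: "min_weighted_KL P c = log_loss P c x0"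
    using False x0 by (simp add: min_weighted_KL_def)
  have "weighted_KL P c d = log_loss P c x0"
    using weighted_KL_eq_neg_entropy_plus_log_loss[of P, OF P_pos d] unfolding d_def
    by (simp add: neg_entropy_point_mass sum_point_mass_mult)
  moreover have "log_loss P c x0 \<le> weighted_KL P c q" if q: "q \<in> prob_simplex" for q
  proof -
    have "0 \<le> sum c UNIV * neg_entropy q"
      using False neg_entropy_nonpos[OF q] by (simp add: mult_nonpos_nonpos)
    moreover have "log_loss P c x0 \<le> (\<Sum>x\<in>UNIV. q x * log_loss P c x)"
      using prob_simplex_sum_mult_mono[OF q, of "\<lambda>_. log_loss P c x0" "log_loss P c"]
        x0[symmetric] q by (simp add: prob_simplex_sum_mult_const)
    ultimately show ?thesis using weighted_KL_eq_neg_entropy_plus_log_loss[of P, OF P_pos q] by simp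
  qed
  ultimately show ?thesis using d min_eq by auto
qed

lemma min_weighted_KL_attained:
  "(\<And>i x. 0 < P i x) \<Longrightarrow> \<exists>q\<in>prob_simplex. weighted_KL P c q = min_weighted_KL P c"
  using min_weighted_KL_is_min by blast

lemma min_weighted_KL_le:
  "(\<And>i x. 0 < P i x) \<Longrightarrow> q \<in> prob_simplex \<Longrightarrow> min_weighted_KL P c \<le> weighted_KL P c q"
  using min_weighted_KL_is_min by blast

lemma min_weighted_KL_mono:
  assumes P: "\<And>i. P i \<in> prob_simplex" and P_pos: "\<And>i x. 0 < P i x"
    and c_le: "\<And>i. c i \<le> c' i"
  shows "min_weighted_KL P c \<le> min_weighted_KL P c'"
proof -
  obtain q where q: "q \<in> prob_simplex" "weighted_KL P c' q = min_weighted_KL P c'"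
    using min_weighted_KL_attained[of P, OF P_pos] by blast
  have "min_weighted_KL P c \<le> weighted_KL P c q" by (rule min_weighted_KL_le[of P, OF P_pos q(1)])
  also have "\<dots> \<le> weighted_KL P c' q"
    unfolding weighted_KL_def
    using c_le KL_nonneg[OF q(1) P P_pos] by (intro sum_mono mult_right_mono) auto
  finally show ?thesis using q(2) by simp
qed

lemma abs_weighted_KL_diff_le:
  assumes P_ge: "\<And>i x. eps \<le> P i x" and eps: "0 < eps" and P: "\<And>i. P i \<in> prob_simplex"
    and q: "q \<in> prob_simplex"
  shows "\<bar>weighted_KL P c q - weighted_KL P c' q\<bar> \<le> ln (1 / eps) * (\<Sum>i\<in>UNIV. \<bar>c i - c' i\<bar>)"
proof -
  have KL_P_nonneg: "0 \<le> KL q (P i)" for i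
    using P_ge[of i] eps by (intro KL_nonneg[OF q P]) (auto intro: less_le_trans)
  have "\<bar>weighted_KL P c q - weighted_KL P c' q\<bar> = \<bar>\<Sum>i\<in>UNIV. (c i - c' i) * KL q (P i)\<bar>"
    unfolding weighted_KL_def by (simp add: sum_subtractf left_diff_distrib)
  also have "\<dots> \<le> (\<Sum>i\<in>UNIV. \<bar>(c i - c' i) * KL q (P i)\<bar>)"
    by (rule sum_abs)
  also have "\<dots> = (\<Sum>i\<in>UNIV. \<bar>c i - c' i\<bar> * KL q (P i))"
    using KL_P_nonneg by (simp add: abs_mult)
  also have "\<dots> \<le> (\<Sum>i\<in>UNIV. \<bar>c i - c' i\<bar> * ln (1 / eps))"
    using KL_le_ln_inverse[OF q P_ge eps] by (intro sum_mono mult_left_mono) auto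
  finally show ?thesis by (simp add: sum_distrib_left mult_ac)
qed

lemma abs_min_weighted_KL_diff_le:
  assumes P_ge: "\<And>i x. eps \<le> P i x" and eps: "0 < eps" and P: "\<And>i. P i \<in> prob_simplex"
  shows "\<bar>min_weighted_KL P c - min_weighted_KL P c'\<bar> \<le> ln (1 / eps) * (\<Sum>i\<in>UNIV. \<bar>c i - c' i\<bar>)"
proof -
  have P_pos: "0 < P i x" for i x using P_ge[of i x] eps by linarith
  have one_side: "min_weighted_KL P c \<le> min_weighted_KL P c' + ln (1 / eps) * (\<Sum>i\<in>UNIV. \<bar>c i - c' i\<bar>)"
    for c c'
  proof -
    obtain q where q: "q \<in> prob_simplex" "weighted_KL P c' q = min_weighted_KL P c'"
      using min_weighted_KL_attained[of P, OF P_pos] by blast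
    have "min_weighted_KL P c \<le> weighted_KL P c q"
      using P_pos q(1) by (rule min_weighted_KL_le)
    moreover have "\<bar>weighted_KL P c q - weighted_KL P c' q\<bar> \<le> ln (1 / eps) * (\<Sum>i\<in>UNIV. \<bar>c i - c' i\<bar>)"
      using P_ge eps P q(1) by (rule abs_weighted_KL_diff_le)
    ultimately show ?thesis using q(2) by linarith
  qed
  show ?thesis
    using one_side[of c c'] one_side[of c' c] by (simp add: abs_minus_commute abs_le_iff)
qed

section \<open>The two values of the game\<close>

lemma objective_eq_sum_weighted_KL:
  "objective nu p Q w = (\<Sum>a\<in>UNIV. w a * weighted_KL (\<lambda>i. nu i a) (\<lambda>i. p $ i) (Q a))"
  unfolding objective_def weighted_KL_def
  by (subst sum.swap) (simp add: sum_distrib_left mult_ac)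

lemma SUP_objective_eq:
  "(SUP w\<in>prob_simplex. objective nu p Q w) = Max (range (\<lambda>a. weighted_KL (\<lambda>i. nu i a) (\<lambda>i. p $ i) (Q a)))"
  unfolding objective_eq_sum_weighted_KL by (rule SUP_prob_simplex_sum_mult)

lemma objective_max_attained:
  "\<exists>w0\<in>prob_simplex. \<forall>w\<in>prob_simplex. objective nu p Q w \<le> objective nu p Q w0"
proof -
  obtain w0 where w0: "w0 \<in> prob_simplex"
    "(\<Sum>a\<in>UNIV. w0 a * weighted_KL (\<lambda>i. nu i a) (\<lambda>i. p $ i) (Q a))
       = Max (range (\<lambda>a. weighted_KL (\<lambda>i. nu i a) (\<lambda>i. p $ i) (Q a)))"
    using prob_simplex_sum_mult_Max_attained[of "\<lambda>a. weighted_KL (\<lambda>i. nu i a) (\<lambda>i. p $ i) (Q a)"]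
    by blast
  have "objective nu p Q w \<le> objective nu p Q w0" if "w \<in> prob_simplex" for w
    unfolding objective_eq_sum_weighted_KL w0(2) using that by (rule prob_simplex_sum_mult_le_Max)
  with w0(1) show ?thesis by blast
qed

locale positive_bandits =
  fixes nu :: "'m::finite \<Rightarrow> 'a::finite \<Rightarrow> 'x::finite \<Rightarrow> real"
  assumes nu_pos: "\<And>i a x. 0 < nu i a x"
begin

abbreviation arm_value :: "real^'m \<Rightarrow> 'a \<Rightarrow> real" where
  "arm_value p a \<equiv> min_weighted_KL (\<lambda>i. nu i a) (\<lambda>i. p $ i)"

lemma arm_value_le: "q \<in> prob_simplex \<Longrightarrow> arm_value p a \<le> weighted_KL (\<lambda>i. nu i a) (\<lambda>i. p $ i) q"
  using nu_pos by (rule min_weighted_KL_le)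

definition arm_minimiser :: "real^'m \<Rightarrow> 'a \<Rightarrow> 'x \<Rightarrow> real" where
  "arm_minimiser p a =
     (SOME q. q \<in> prob_simplex \<and> weighted_KL (\<lambda>i. nu i a) (\<lambda>i. p $ i) q = arm_value p a)"

lemma arm_minimiser:
  "arm_minimiser p a \<in> prob_simplex"
  "weighted_KL (\<lambda>i. nu i a) (\<lambda>i. p $ i) (arm_minimiser p a) = arm_value p a"
proof -
  have "\<exists>q. q \<in> prob_simplex \<and> weighted_KL (\<lambda>i. nu i a) (\<lambda>i. p $ i) q = arm_value p a"
    using min_weighted_KL_attained[of "\<lambda>i. nu i a"] nu_pos by blast
  from someI_ex[OF this] show
    "arm_minimiser p a \<in> prob_simplex"
    "weighted_KL (\<lambda>i. nu i a) (\<lambda>i. p $ i) (arm_minimiser p a) = arm_value p a"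
    unfolding arm_minimiser_def by auto
qed

lemma objective_arm_minimiser: "objective nu p (arm_minimiser p) w = (\<Sum>a\<in>UNIV. w a * arm_value p a)"
  by (simp add: objective_eq_sum_weighted_KL arm_minimiser)

lemma objective_ge_arm_values:
  assumes "\<forall>a. Q a \<in> prob_simplex" and "w \<in> prob_simplex"
  shows "(\<Sum>a\<in>UNIV. w a * arm_value p a) \<le> objective nu p Q w"
  unfolding objective_eq_sum_weighted_KL
  using assms by (intro prob_simplex_sum_mult_mono arm_value_le) auto

lemma best_response_attained:
  assumes "w \<in> prob_simplex"
  shows "\<exists>Q0. (\<forall>a. Q0 a \<in> prob_simplex) \<and>
     (\<forall>Q. (\<forall>a. Q a \<in> prob_simplex) \<longrightarrow> objective nu p Q0 w \<le> objective nu p Q w)"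
  using assms arm_minimiser(1)
  by (intro exI[of _ "arm_minimiser p"]) (simp add: objective_arm_minimiser objective_ge_arm_values)

lemma INF_objective_eq:
  assumes w: "w \<in> prob_simplex"
  shows "(INF Q\<in>{Q. \<forall>a. Q a \<in> prob_simplex}. objective nu p Q w) = (\<Sum>a\<in>UNIV. w a * arm_value p a)"
proof (rule cInf_eq_minimum)
  show "(\<Sum>a\<in>UNIV. w a * arm_value p a) \<in> (\<lambda>Q. objective nu p Q w) ` {Q. \<forall>a. Q a \<in> prob_simplex}"
    by (intro rev_image_eqI[of "arm_minimiser p"]) (simp_all add: arm_minimiser objective_arm_minimiser)
next
  fix y assume "y \<in> (\<lambda>Q. objective nu p Q w) ` {Q. \<forall>a. Q a \<in> prob_simplex}"
  then show "(\<Sum>a\<in>UNIV. w a * arm_value p a) \<le> y"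
    using objective_ge_arm_values w by blast
qed

lemma Hplus_eq_Max_arm_value: "Hplus nu p = Max (range (arm_value p))"
  unfolding Hplus_def SUP_objective_eq
proof (rule cInf_eq_minimum)
  show "Max (range (arm_value p))
      \<in> (\<lambda>Q. Max (range (\<lambda>a. weighted_KL (\<lambda>i. nu i a) (\<lambda>i. p $ i) (Q a)))) ` {Q. \<forall>a. Q a \<in> prob_simplex}"
    by (intro rev_image_eqI[of "arm_minimiser p"]) (simp_all add: arm_minimiser)
next
  fix y assume "y \<in> (\<lambda>Q. Max (range (\<lambda>a. weighted_KL (\<lambda>i. nu i a) (\<lambda>i. p $ i) (Q a)))) `
    {Q. \<forall>a. Q a \<in> prob_simplex}"
  then obtain Q where Q: "\<forall>a. Q a \<in> prob_simplex"
    and y: "y = Max (range (\<lambda>a. weighted_KL (\<lambda>i. nu i a) (\<lambda>i. p $ i) (Q a)))"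
    by blast
  show "Max (range (arm_value p)) \<le> y"
    unfolding y using Q by (intro Max_range_mono arm_value_le) simp
qed

lemma Hminus_eq_Max_arm_value: "Hminus nu p = Max (range (arm_value p))"
  unfolding Hminus_def
  by (simp add: INF_objective_eq SUP_prob_simplex_sum_mult cong: SUP_cong)

lemma Hplus_eq_Hminus: "Hplus nu p = Hminus nu p"
  by (simp add: Hminus_eq_Max_arm_value Hplus_eq_Max_arm_value)

lemma Hplus_attained:
  "\<exists>Q0. (\<forall>a. Q0 a \<in> prob_simplex) \<and> (\<forall>Q. (\<forall>a. Q a \<in> prob_simplex) \<longrightarrow>
     (SUP w\<in>prob_simplex. objective nu p Q0 w) \<le> (SUP w\<in>prob_simplex. objective nu p Q w))"
proof (intro exI[of _ "arm_minimiser p"] conjI allI impI)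
  fix Q :: "'a \<Rightarrow> 'x \<Rightarrow> real" assume "\<forall>a. Q a \<in> prob_simplex"
  then show "(SUP w\<in>prob_simplex. objective nu p (arm_minimiser p) w) \<le> (SUP w\<in>prob_simplex. objective nu p Q w)"
    unfolding SUP_objective_eq by (intro Max_range_mono) (simp add: arm_minimiser arm_value_le)
qed (simp add: arm_minimiser)

lemma Hminus_attained:
  "\<exists>w0\<in>prob_simplex. \<forall>w\<in>prob_simplex.
     (INF Q\<in>{Q. \<forall>a. Q a \<in> prob_simplex}. objective nu p Q w) \<le>
     (INF Q\<in>{Q. \<forall>a. Q a \<in> prob_simplex}. objective nu p Q w0)"
proof -
  obtain w0 where w0: "w0 \<in> prob_simplex" "(\<Sum>a\<in>UNIV. w0 a * arm_value p a) = Max (range (arm_value p))"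
    using prob_simplex_sum_mult_Max_attained[of "arm_value p"] by blast
  then show ?thesis
    by (intro bexI[of _ w0] ballI) (simp_all add: INF_objective_eq prob_simplex_sum_mult_le_Max)
qed

lemma Hplus_closed_form:
  "Hplus nu p =
     (if (\<Sum>i\<in>UNIV. p $ i) > 0
      then Max (range (\<lambda>a. - (\<Sum>i\<in>UNIV. p $ i) *
             ln (\<Sum>x\<in>UNIV. \<Prod>i\<in>UNIV. nu i a x powr (p $ i / (\<Sum>k\<in>UNIV. p $ k)))))
      else Max (range (\<lambda>a. Min (range (\<lambda>x. - (\<Sum>i\<in>UNIV. p $ i * ln (nu i a x)))))))"
  by (simp add: Hplus_eq_Max_arm_value min_weighted_KL_def log_loss_def)

end

lemma sum_abs_le_sqrt_card_mult_norm:
  fixes x :: "real^'n"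
  shows "(\<Sum>i\<in>UNIV. \<bar>x $ i\<bar>) \<le> sqrt (real CARD('n)) * norm x"
proof -
  have "(\<Sum>i\<in>UNIV. \<bar>x $ i\<bar> * \<bar>1\<bar>) \<le> L2_set (\<lambda>i. x $ i) UNIV * L2_set (\<lambda>i. 1) (UNIV :: 'n set)"
    by (rule L2_set_mult_ineq)
  moreover have "L2_set (\<lambda>i. x $ i) UNIV = norm x"
    unfolding norm_vec_def L2_set_def by simp
  ultimately show ?thesis by (simp add: L2_set_constant mult_ac)
qed

locale eps_bounded_bandits =
  fixes nu :: "'m::finite \<Rightarrow> 'a::finite \<Rightarrow> 'x::finite \<Rightarrow> real" and eps :: real
  assumes nu_simplex: "\<And>i a. nu i a \<in> prob_simplex"
    and nu_ge_eps: "\<And>i a x. eps \<le> nu i a x"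
    and eps_pos: "0 < eps"
begin

sublocale positive_bandits nu
  using eps_pos nu_ge_eps by unfold_locales (rule less_le_trans)

lemma ln_inverse_eps_nonneg: "0 \<le> ln (1 / eps)"
proof -
  have "eps \<le> 1"
    using nu_ge_eps prob_simplex_le_one[OF nu_simplex] by (meson order_trans)
  with eps_pos show ?thesis by simp
qed

lemma Hplus_mono: "(\<And>i. p $ i \<le> p' $ i) \<Longrightarrow> Hplus nu p \<le> Hplus nu p'"
  unfolding Hplus_eq_Max_arm_value
  by (intro Max_range_mono min_weighted_KL_mono nu_simplex nu_pos)

lemma Hplus_lipschitz:
  "\<bar>Hplus nu p - Hplus nu q\<bar> \<le> sqrt (real CARD('m)) * ln (1 / eps) * norm (p - q)"
proof -
  have "\<bar>Hplus nu p - Hplus nu q\<bar> \<le> ln (1 / eps) * (\<Sum>i\<in>UNIV. \<bar>p $ i - q $ i\<bar>)"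
    unfolding Hplus_eq_Max_arm_value
    by (intro abs_Max_range_diff_le abs_min_weighted_KL_diff_le nu_ge_eps eps_pos nu_simplex)
  also have "\<dots> \<le> ln (1 / eps) * (sqrt (real CARD('m)) * norm (p - q))"
    using ln_inverse_eps_nonneg sum_abs_le_sqrt_card_mult_norm[of "p - q"]
    by (intro mult_left_mono) simp_all
  finally show ?thesis by (simp add: mult_ac)
qed

end

theorem mainTheorem4:
  fixes nu :: "'m::finite \<Rightarrow> 'a::finite \<Rightarrow> 'x::finite \<Rightarrow> real" and eps :: real
  assumes "CARD('m) \<ge> 2"
    and "0 < eps" and "eps < 1"
    and "\<forall>i a. nu i a \<in> prob_simplex"
    and "\<forall>i a x. eps \<le> nu i a x"
  shows "(\<forall>p::real^'m.
            (\<forall>Q. (\<forall>a. Q a \<in> prob_simplex) \<longrightarrow>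
               (\<exists>w0\<in>prob_simplex. \<forall>w\<in>prob_simplex. objective nu p Q w \<le> objective nu p Q w0)) \<and>
            (\<exists>Q0. (\<forall>a. Q0 a \<in> prob_simplex) \<and> (\<forall>Q. (\<forall>a. Q a \<in> prob_simplex) \<longrightarrow>
               (SUP w\<in>prob_simplex. objective nu p Q0 w) \<le> (SUP w\<in>prob_simplex. objective nu p Q w))) \<and>
            (\<forall>w\<in>prob_simplex. \<exists>Q0. (\<forall>a. Q0 a \<in> prob_simplex) \<and>
               (\<forall>Q. (\<forall>a. Q a \<in> prob_simplex) \<longrightarrow> objective nu p Q0 w \<le> objective nu p Q w)) \<and>
            (\<exists>w0\<in>prob_simplex. \<forall>w\<in>prob_simplex.
               (INF Q\<in>{Q. \<forall>a. Q a \<in> prob_simplex}. objective nu p Q w) \<le>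
               (INF Q\<in>{Q. \<forall>a. Q a \<in> prob_simplex}. objective nu p Q w0)) \<and>
            Hplus nu p = Hminus nu p \<and>
            Hplus nu p =
              (if (\<Sum>i\<in>UNIV. p $ i) > 0
               then Max (range (\<lambda>a. - (\<Sum>i\<in>UNIV. p $ i) *
                      ln (\<Sum>x\<in>UNIV. \<Prod>i\<in>UNIV. nu i a x powr (p $ i / (\<Sum>k\<in>UNIV. p $ k)))))
               else Max (range (\<lambda>a. Min (range (\<lambda>x. - (\<Sum>i\<in>UNIV. p $ i * ln (nu i a x))))))))
       \<and> (\<forall>p q::real^'m. \<bar>Hplus nu p - Hplus nu q\<bar> \<le> sqrt (real CARD('m)) * ln (1 / eps) * norm (p - q))
       \<and> (\<forall>(p::real^'m) i t. t \<ge> 0 \<longrightarrow> Hplus nu p \<le> Hplus nu (p + (\<chi> j. if j = i then t else 0)))"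
proof -
  interpret eps_bounded_bandits nu eps
    using assms(2,4,5) by unfold_locales auto
  have Hplus_increment:
    "Hplus nu p \<le> Hplus nu (p + (\<chi> j. if j = i then t else 0))" if "0 \<le> t" for p :: "real^'m" and i t
    using that by (intro Hplus_mono) simp
  show ?thesis
    by (intro conjI allI impI ballI)
      (rule objective_max_attained Hplus_attained best_response_attained Hminus_attained
        Hplus_eq_Hminus Hplus_closed_form Hplus_lipschitz Hplus_increment; assumption)+
qed

end
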